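(* Let $P$ be a poset. If $P$ is well-quasi-ordered and the quasi-ordered set $(S_\omega(P);\leq_{dom})$ is better-quasi-ordered, then $P$ is better-quasi-ordered.
   Context: $S_\omega(P)$ is the set of strictly increasing sequences $x_0<x_1<\cdots$ of elements of $P$, each identified with its set of terms. For subsets $X,Y\subseteq P$, $X\leq_{dom} Y$ means that for every $x\in X$ there is $y\in Y$ with $x\leq y$ (a quasi-order). A quasi-ordered set is well-quasi-ordered (wqo) if it is well-founded and has no infinite antichain. Barriers and bqo: finite subsets of $\mathbb{N}$ are identified with their increasing enumerations. For finite $s,t\subseteq\mathbb{N}$ write $s\triangleleft t$ if there is a finite $r\subseteq\mathbb{N}$ such that $s$ is a proper initial segment of $r$ and $t$ is $r$ with its least element removed. A barrier is an infinite set $B$ of finite subsets of $\mathbb{N}$, no member of which is a proper subset of another, such that every infinite $X\subseteq\bigcup B$ has a nonempty initial segment belonging to $B$. A barrier is well-ordered by the lexicographic order; its order type is the type of this well-order. A map $f$ from a barrier $B$ into a quasi-ordered set $Q$ is good if there exist $s,t\in B$ with $s\triangleleft t$ and $f(s)\leq f(t)$, and bad otherwise. For a countable ordinal $\alpha$, $Q$ is $\alpha$-better-quasi-ordered ($\alpha$-bqo) if every map from a barrier of order type at most $\alpha$ into $Q$ is good; $Q$ is better-quasi-ordered (bqo) if it is $\alpha$-bqo for every countable ordinal $\alpha$. *)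

theory Defs
  imports Main
begin

definition wqo_on :: "'q set \<Rightarrow> ('q \<Rightarrow> 'q \<Rightarrow> bool) \<Rightarrow> bool" where
  "wqo_on A le \<longleftrightarrow>
     wfp_on A (\<lambda>x y. le x y \<and> \<not> le y x) \<and>
     \<not> (\<exists>C. C \<subseteq> A \<and> infinite C \<and> (\<forall>x\<in>C. \<forall>y\<in>C. x \<noteq> y \<longrightarrow> \<not> le x y))"

definition init_seg :: "nat set \<Rightarrow> nat set \<Rightarrow> bool" where
  "init_seg s X \<longleftrightarrow> s \<subseteq> X \<and> (\<forall>x\<in>X. \<forall>y\<in>s. x \<le> y \<longrightarrow> x \<in> s)"

definition barrier :: "nat set set \<Rightarrow> bool" where
  "barrier B \<longleftrightarrow> infinite B \<and> (\<forall>s\<in>B. finite s) \<and> (\<forall>s\<in>B. \<forall>t\<in>B. \<not> s \<subset> t) \<and>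
     (\<forall>X. X \<subseteq> \<Union>B \<and> infinite X \<longrightarrow> (\<exists>s\<in>B. s \<noteq> {} \<and> init_seg s X))"

definition shift :: "nat set \<Rightarrow> nat set \<Rightarrow> bool" where
  "shift s t \<longleftrightarrow> finite s \<and> finite t \<and>
     (\<exists>r. finite r \<and> init_seg s r \<and> s \<noteq> r \<and> t = r - {Min r})"

definition lex_rel :: "nat set set \<Rightarrow> nat set rel" where
  "lex_rel B = {(s, t). s \<in> B \<and> t \<in> B \<and>
     (s = t \<or> (sorted_list_of_set s, sorted_list_of_set t) \<in> lexord {(m, n). m < n})}"

definition good :: "('q \<Rightarrow> 'q \<Rightarrow> bool) \<Rightarrow> nat set set \<Rightarrow> (nat set \<Rightarrow> 'q) \<Rightarrow> bool" where
  "good le B f \<longleftrightarrow> (\<exists>s\<in>B. \<exists>t\<in>B. shift s t \<and> le (f s) (f t))"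

text \<open>alpha-bqo; the countable ordinal alpha is represented by a well-order on a subset of nat,
  and "order type at most alpha" by embeddability of the lexicographic well-order.\<close>
definition alpha_bqo :: "nat rel \<Rightarrow> 'q set \<Rightarrow> ('q \<Rightarrow> 'q \<Rightarrow> bool) \<Rightarrow> bool" where
  "alpha_bqo \<alpha> A le \<longleftrightarrow>
     (\<forall>B f. barrier B \<and> (lex_rel B, \<alpha>) \<in> ordLeq \<and> f ` B \<subseteq> A \<longrightarrow> good le B f)"

definition bqo_on :: "'q set \<Rightarrow> ('q \<Rightarrow> 'q \<Rightarrow> bool) \<Rightarrow> bool" where
  "bqo_on A le \<longleftrightarrow> (\<forall>\<alpha> :: nat rel. Well_order \<alpha> \<longrightarrow> alpha_bqo \<alpha> A le)"

definition S_omega :: "'a::order set \<Rightarrow> 'a set set" where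
  "S_omega P = {range x | x :: nat \<Rightarrow> 'a. (\<forall>i. x i \<in> P) \<and> strict_mono x}"

definition dom_le :: "'a::order set \<Rightarrow> 'a set \<Rightarrow> bool" where
  "dom_le X Y \<longleftrightarrow> (\<forall>x\<in>X. \<exists>y\<in>Y. x \<le> y)"

end

(*
  Suppose f is a bad map from a barrier B into P. Fusion arguments along the tree of initial
  segments of B, using that P is wqo, thin B out so that below every node u one of three things
  happens: f is constant; or the children of u carry constant values whose downward closures
  converge to that of a strictly increasing sequence C_u in S_omega(P); or all children of u are
  again of the last two kinds ("dead" nodes). Badness of f propagates to the constants: if u shifts
  to v, the constant below u is not below the constant below v. By the wqo property the root is
  therefore dead, the minimal limit nodes form a front, and on a barrier inside this front the map
  u |-> C_u is bad for domination, since C_u <=dom C_v would put the constant below a child of u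
  under the constant below a child of v.
*)
theory Submission
  imports Defs "HOL-Library.Ramsey" "HOL-Library.Countable_Set"
begin

lemma init_seg_subset: "init_seg s Z \<Longrightarrow> s \<subseteq> Z"
  unfolding init_seg_def by (rule conjunct1)

lemma init_seg_refl [simp]: "init_seg s s"
  unfolding init_seg_def by blast

lemma init_seg_empty [simp]: "init_seg {} s"
  unfolding init_seg_def by blast

lemma init_seg_trans: "init_seg a b \<Longrightarrow> init_seg b c \<Longrightarrow> init_seg a c"
  unfolding init_seg_def by blast

lemma init_seg_restrict: "init_seg s Z \<Longrightarrow> s \<subseteq> W \<Longrightarrow> W \<subseteq> Z \<Longrightarrow> init_seg s W"
  unfolding init_seg_def by blast

lemma init_seg_linear:
  assumes "init_seg s Z" "init_seg w Z"
  shows "s \<subseteq> w \<or> w \<subseteq> s"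
proof (rule ccontr)
  assume "\<not> ?thesis"
  then obtain x y where xy: "x \<in> s" "x \<notin> w" "y \<in> w" "y \<notin> s" by blast
  then have "x \<in> Z" "y \<in> Z"
    using assms init_seg_subset by blast+
  show False
  proof (cases "x \<le> y")
    case True
    then show False using assms(2) xy \<open>x \<in> Z\<close> unfolding init_seg_def by blast
  next
    case False
    then have "y \<le> x" by simp
    then show False using assms(1) xy \<open>y \<in> Z\<close> unfolding init_seg_def by blast
  qed
qed

lemma init_seg_insert_greater: "init_seg u r \<Longrightarrow> \<forall>x\<in>r. x < m \<Longrightarrow> init_seg u (insert m r)"
  unfolding init_seg_def by (auto dest: leD)

lemma init_seg_next:
  assumes "init_seg w u" "w \<noteq> u" "finite u"
  defines "m \<equiv> Min (u - w)"
  shows "m \<in> u" "m \<notin> w" "\<forall>x\<in>w. x < m" "init_seg (insert m w) u"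
    "\<forall>x\<in>u - insert m w. m < x"
proof -
  have fin: "finite (u - w)" and ne: "u - w \<noteq> {}"
    using assms(1-3) init_seg_subset by auto
  have m: "m \<in> u - w" and m_le: "\<And>x. x \<in> u - w \<Longrightarrow> m \<le> x"
    using Min_in[OF fin ne] Min_le[OF fin] unfolding m_def by auto
  then show "m \<in> u" "m \<notin> w" by auto
  show below: "\<forall>x\<in>w. x < m"
  proof
    fix x assume "x \<in> w"
    show "x < m"
    proof (rule ccontr)
      assume "\<not> x < m"
      then have "m \<le> x" by simp
      then have "m \<in> w"
        using assms(1) m \<open>x \<in> w\<close> unfolding init_seg_def by blast
      then show False using m by blast
    qed
  qed
  show "\<forall>x\<in>u - insert m w. m < x"
    using m_le by force
  show "init_seg (insert m w) u"
    unfolding init_seg_def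
  proof (intro conjI ballI impI)
    show "insert m w \<subseteq> u"
      using m assms(1) init_seg_subset by blast
  next
    fix x y assume "x \<in> u" "y \<in> insert m w" "x \<le> y"
    then show "x \<in> insert m w"
      using m_le[of x] below by fastforce
  qed
qed

lemma Min_in_init_seg:
  assumes "init_seg u r" "u \<noteq> {}" "finite r"
  shows "Min r \<in> u"
proof -
  obtain y where y: "y \<in> u"
    using assms(2) by blast
  then have "Min r \<le> y" "Min r \<in> r"
    using assms(1,3) init_seg_subset Min_le Min_in by blast+
  then show ?thesis
    using assms(1) y unfolding init_seg_def by blast
qed

lemma init_seg_Diff_Max: "finite w \<Longrightarrow> init_seg (w - {Max w}) w"
  unfolding init_seg_def using Max_ge by fastforce

lemma sorted_list_of_set_init_seg:
  assumes "init_seg w s" "finite s"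
  shows "sorted_list_of_set s = sorted_list_of_set w @ sorted_list_of_set (s - w)"
proof (rule sorted_distinct_set_unique)
  have fw: "finite w"
    using assms init_seg_subset finite_subset by blast
  have "x < y" if "x \<in> w" "y \<in> s - w" for x y
    using assms(1) that unfolding init_seg_def by (meson DiffE not_le_imp_less)
  then show "sorted (sorted_list_of_set w @ sorted_list_of_set (s - w))"
    unfolding sorted_append using fw assms(2) by (auto intro: less_imp_le)
  show "distinct (sorted_list_of_set w @ sorted_list_of_set (s - w))"
    using fw assms(2) by auto
  show "set (sorted_list_of_set s) = set (sorted_list_of_set w @ sorted_list_of_set (s - w))"
    using fw assms init_seg_subset by auto
qed simp_all

lemma sorted_list_of_set_next:
  assumes "init_seg w s" "w \<noteq> s" "finite s"
  shows "\<exists>xs. sorted_list_of_set s = sorted_list_of_set w @ Min (s - w) # xs"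
proof -
  have "s - w \<noteq> {}"
    using assms(1,2) init_seg_subset by blast
  then show ?thesis
    using sorted_list_of_set_init_seg[OF assms(1,3)] sorted_list_of_set_nonempty[of "s - w"] assms(3)
    by auto
qed

section \<open>Fronts and the tree of their initial segments\<close>

definition above :: "nat set \<Rightarrow> nat set \<Rightarrow> nat set" where
  "above u Y = {n\<in>Y. \<forall>x\<in>u. x < n}"

lemma above_empty [simp]: "above {} Y = Y"
  unfolding above_def by simp

lemma above_subset: "above u Y \<subseteq> Y"
  unfolding above_def by auto

lemma above_mono: "Y' \<subseteq> Y \<Longrightarrow> above u Y' \<subseteq> above u Y"
  unfolding above_def by auto

lemma above_antimono: "u \<subseteq> w \<Longrightarrow> above w X \<subseteq> above u X"
  unfolding above_def by blast

lemma above_above: "\<forall>x\<in>w. x < n \<Longrightarrow> above {n} (above w Y) = above (insert n w) Y"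
  unfolding above_def by auto

lemma infinite_above: "infinite X \<Longrightarrow> finite u \<Longrightarrow> infinite (above u X)"
proof -
  assume X: "infinite X" and u: "finite u"
  have "X - {..Max u} \<subseteq> above u X"
    using Max_ge[OF u] unfolding above_def by fastforce
  moreover have "infinite (X - {..Max u})"
    using X by simp
  ultimately show ?thesis
    using finite_subset by blast
qed

text \<open>A front on X in the sense of Nash-Williams: a barrier is a front on the union of its
  members, but a front need not be thin with respect to inclusion.\<close>
definition front :: "nat set set \<Rightarrow> nat set \<Rightarrow> bool" where
  "front F X \<longleftrightarrow> infinite X \<and> (\<forall>s\<in>F. finite s \<and> s \<subseteq> X) \<and>
     (\<forall>s\<in>F. \<forall>t\<in>F. init_seg s t \<longrightarrow> s = t) \<and>
     (\<forall>Z. Z \<subseteq> X \<and> infinite Z \<longrightarrow> (\<exists>s\<in>F. init_seg s Z))"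

lemma front_infinite: "front F X \<Longrightarrow> infinite X"
  unfolding front_def by blast

lemma front_finite: "front F X \<Longrightarrow> s \<in> F \<Longrightarrow> finite s"
  unfolding front_def by blast

lemma front_subset: "front F X \<Longrightarrow> s \<in> F \<Longrightarrow> s \<subseteq> X"
  unfolding front_def by blast

lemma front_thin: "front F X \<Longrightarrow> s \<in> F \<Longrightarrow> t \<in> F \<Longrightarrow> init_seg s t \<Longrightarrow> s = t"
  unfolding front_def by blast

lemma front_init_seg: "front F X \<Longrightarrow> Z \<subseteq> X \<Longrightarrow> infinite Z \<Longrightarrow> \<exists>s\<in>F. init_seg s Z"
  unfolding front_def by blast

lemma barrier_front:
  assumes "barrier B"
  shows "front B (\<Union>B)"
proof -
  have "infinite B" "\<forall>s\<in>B. finite s" "\<forall>s\<in>B. \<forall>t\<in>B. \<not> s \<subset> t"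
    "\<forall>X. X \<subseteq> \<Union>B \<and> infinite X \<longrightarrow> (\<exists>s\<in>B. s \<noteq> {} \<and> init_seg s X)"
    using assms unfolding barrier_def by blast+
  moreover have "infinite (\<Union>B)"
    using \<open>infinite B\<close> finite_UnionD by blast
  moreover have "\<forall>s\<in>B. finite s \<and> s \<subseteq> \<Union>B"
    using \<open>\<forall>s\<in>B. finite s\<close> by blast
  moreover have "\<forall>s\<in>B. \<forall>t\<in>B. init_seg s t \<longrightarrow> s = t"
    using \<open>\<forall>s\<in>B. \<forall>t\<in>B. \<not> s \<subset> t\<close> init_seg_subset by blast
  moreover have "\<forall>Z. Z \<subseteq> \<Union>B \<and> infinite Z \<longrightarrow> (\<exists>s\<in>B. init_seg s Z)"
    using \<open>\<forall>X. X \<subseteq> \<Union>B \<and> infinite X \<longrightarrow> (\<exists>s\<in>B. s \<noteq> {} \<and> init_seg s X)\<close> by blast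
  ultimately show ?thesis
    unfolding front_def by (intro conjI) assumption+
qed

definition prefixes :: "nat set set \<Rightarrow> nat set set" where
  "prefixes F = {w. \<exists>s\<in>F. init_seg w s}"

definition prefix_ext :: "nat set set \<Rightarrow> (nat set \<times> nat set) set" where
  "prefix_ext F = {(v, w). v \<in> prefixes F \<and> init_seg w v \<and> w \<noteq> v}"

lemma front_empty_prefix:
  assumes "front F X"
  shows "{} \<in> prefixes F"
proof -
  obtain s where "s \<in> F"
    using front_init_seg[OF assms order_refl front_infinite[OF assms]] by blast
  then show ?thesis
    unfolding prefixes_def by auto
qed

lemma front_prefix_subset:
  assumes "front F X" "w \<in> prefixes F"
  shows "w \<subseteq> X" "finite w"
proof -
  obtain s where "s \<in> F" "init_seg w s"
    using assms(2) unfolding prefixes_def by blast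
  then have "w \<subseteq> s" "s \<subseteq> X" "finite s"
    using init_seg_subset front_subset[OF assms(1)] front_finite[OF assms(1)] by blast+
  then show "w \<subseteq> X" "finite w"
    using finite_subset by blast+
qed

lemma init_seg_Un_above: "init_seg u (u \<union> above u Y)"
  unfolding init_seg_def above_def by (auto dest: leD)

text \<open>A prefix that is not yet in the front can be continued by any larger element n of X: test the
  front on the prefix, followed by n and the tail of X beyond n.\<close>
lemma front_prefix_child:
  assumes fr: "front F X" and w: "w \<in> prefixes F" "w \<notin> F" and n: "n \<in> X" "\<forall>x\<in>w. x < n"
  shows "insert n w \<in> prefixes F" "(insert n w, w) \<in> prefix_ext F"
proof -
  obtain t where t: "t \<in> F" "init_seg w t"
    using w(1) unfolding prefixes_def by blast
  define Z where "Z = insert n w \<union> above (insert n w) X"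
  have ZX: "Z \<subseteq> X"
    using front_prefix_subset[OF fr w(1)] n above_subset unfolding Z_def by blast
  have "infinite Z"
    using infinite_above[OF front_infinite[OF fr]] front_prefix_subset(2)[OF fr w(1)]
    unfolding Z_def by simp
  then obtain s where s: "s \<in> F" "init_seg s Z"
    using front_init_seg[OF fr ZX] by blast
  have nwZ: "init_seg (insert n w) Z"
    unfolding Z_def by (rule init_seg_Un_above)
  have wZ: "init_seg w Z"
    using init_seg_trans[OF init_seg_insert_greater[OF init_seg_refl n(2)] nwZ] .
  have "\<not> s \<subseteq> w"
  proof
    assume "s \<subseteq> w"
    then have "init_seg s w"
      using init_seg_restrict[OF s(2) _ init_seg_subset[OF wZ]] by blast
    then have "s = t"
      using front_thin[OF fr s(1) t(1)] init_seg_trans[OF _ t(2)] by blast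
    then show False
      using \<open>s \<subseteq> w\<close> init_seg_subset[OF t(2)] w(2) s(1) by auto
  qed
  then have "w \<subseteq> s" "n \<in> s"
    using init_seg_linear[OF s(2) wZ] init_seg_linear[OF s(2) nwZ] by blast+
  then have "init_seg (insert n w) s"
    using init_seg_restrict[OF nwZ _ init_seg_subset[OF s(2)]] by blast
  then show "insert n w \<in> prefixes F"
    using s(1) unfolding prefixes_def by blast
  then show "(insert n w, w) \<in> prefix_ext F"
    unfolding prefix_ext_def using init_seg_insert_greater[OF init_seg_refl n(2)] n(2) by auto
qed

lemma finite_subset_UN_mono:
  fixes u :: "nat \<Rightarrow> 'a set"
  assumes "mono u" "finite s" "s \<subseteq> (\<Union>i. u i)"
  shows "\<exists>k. s \<subseteq> u k"
  using assms(2,3)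
proof (induction s rule: finite_induct)
  case (insert x s)
  then obtain k i where "s \<subseteq> u k" "x \<in> u i" by blast
  then have "insert x s \<subseteq> u (max i k)"
    using monoD[OF assms(1), of i "max i k"] monoD[OF assms(1), of k "max i k"] by auto
  then show ?case by blast
qed simp

text \<open>An infinite ascending chain of prefixes would have an infinite union, whose initial segment
  in the front would be properly extended by one of the prefixes.\<close>
lemma wf_prefix_ext:
  assumes fr: "front F X"
  shows "wf (prefix_ext F)"
proof (rule ccontr)
  assume "\<not> wf (prefix_ext F)"
  then obtain u where u: "\<And>i. (u (Suc i), u i) \<in> prefix_ext F"
    unfolding wf_iff_no_infinite_down_chain by blast
  have step: "u i \<subset> u (Suc i)" "u (Suc i) \<in> prefixes F" for i
    using u[of i] init_seg_subset unfolding prefix_ext_def by auto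
  have mono_u: "mono u"
    unfolding mono_iff_le_Suc using step(1) by blast
  have fin: "finite (u (Suc i))" "u (Suc i) \<subseteq> X" for i
    using front_prefix_subset[OF fr step(2)] by auto
  define Z where "Z = (\<Union>i. u i)"
  have "u i \<subseteq> X" for i
    using fin step(1) by blast
  then have ZX: "Z \<subseteq> X"
    unfolding Z_def by blast
  have card_u: "i \<le> card (u (Suc i))" for i
  proof (induction i)
    case (Suc i)
    then show ?case
      using psubset_card_mono[OF fin(1) step(1)[of "Suc i"]] by simp
  qed simp
  have "infinite Z"
  proof
    assume "finite Z"
    then have "card (u (Suc (Suc (card Z)))) \<le> card Z"
      by (intro card_mono) (auto simp: Z_def)
    then show False
      using card_u[of "Suc (card Z)"] by simp
  qed
  then obtain s where s: "s \<in> F" "init_seg s Z"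
    using front_init_seg[OF fr ZX] by blast
  obtain k where k: "s \<subseteq> u k"
    using finite_subset_UN_mono[OF mono_u front_finite[OF fr s(1)]] init_seg_subset[OF s(2)]
    unfolding Z_def by blast
  have "init_seg s (u (Suc k))"
    using init_seg_restrict[OF s(2)] k step(1)[of k] unfolding Z_def by blast
  moreover obtain t where t: "t \<in> F" "init_seg (u (Suc k)) t"
    using step(2)[of k] unfolding prefixes_def by blast
  ultimately have "s = t"
    using front_thin[OF fr s(1) t(1)] init_seg_trans by blast
  then show False
    using t(2) k step(1)[of k] init_seg_subset by blast
qed

section \<open>Fusion and the partition theorem for fronts\<close>

text \<open>Diagonalisation: repeatedly take the least remaining element n and shrink the rest to an
  infinite set on which the property of n holds.\<close>
lemma fusion:
  fixes \<Phi> :: "nat \<Rightarrow> nat set \<Rightarrow> bool"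
  assumes Y: "infinite Y"
    and hered: "\<And>n W W'. \<Phi> n W \<Longrightarrow> W' \<subseteq> W \<Longrightarrow> \<Phi> n W'"
    and ex: "\<And>n W. n \<in> Y \<Longrightarrow> W \<subseteq> Y \<Longrightarrow> infinite W \<Longrightarrow> \<exists>W'\<subseteq>W. infinite W' \<and> \<Phi> n W'"
  shows "\<exists>Z\<subseteq>Y. infinite Z \<and> (\<forall>n\<in>Z. \<Phi> n (above {n} Z))"
proof -
  define nxt where
    "nxt V = (SOME W. W \<subseteq> above {Inf V} V \<and> infinite W \<and> \<Phi> (Inf V) W)" for V
  have nxt: "nxt U \<subseteq> above {Inf U} U \<and> infinite (nxt U) \<and> \<Phi> (Inf U) (nxt U)"
    if "U \<subseteq> Y" "infinite U" for U
  proof -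
    have "Inf U \<in> Y" "above {Inf U} U \<subseteq> Y" "infinite (above {Inf U} U)"
      using Inf_nat_def1[OF infinite_imp_nonempty[OF that(2)]] that above_subset
        infinite_above[OF that(2)] by auto
    then have "\<exists>W\<subseteq>above {Inf U} U. infinite W \<and> \<Phi> (Inf U) W"
      using ex by blast
    then show ?thesis
      unfolding nxt_def by (rule someI2_ex) blast
  qed
  define V where "V = rec_nat Y (\<lambda>_. nxt)"
  have V_Suc: "V (Suc k) = nxt (V k)" for k
    by (simp add: V_def)
  have V: "V k \<subseteq> Y \<and> infinite (V k)" for k
  proof (induction k)
    case 0
    then show ?case
      using Y by (simp add: V_def)
  next
    case (Suc k)
    then show ?case
      using nxt[of "V k"] above_subset[of "{Inf (V k)}" "V k"] unfolding V_Suc by blast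
  qed
  define n where "n k = Inf (V k)" for k
  have n: "n k \<in> V k" for k
    unfolding n_def using Inf_nat_def1[OF infinite_imp_nonempty] V[of k] by blast
  have V_step: "V (Suc k) \<subseteq> above {n k} (V k)" "\<Phi> (n k) (V (Suc k))" for k
    using nxt[of "V k"] V[of k] unfolding V_Suc n_def by blast+
  have V_antimono: "V j \<subseteq> V i" if "i \<le> j" for i j
    using that
  proof (induction j rule: dec_induct)
    case (step j)
    then show ?case using V_step(1)[of j] above_subset by blast
  qed simp
  have "n k < n (Suc k)" for k
    using n[of "Suc k"] V_step(1)[of k] unfolding above_def by blast
  then have sm: "strict_mono n"
    by (simp add: strict_mono_Suc_iff)
  have "\<Phi> (n k) (above {n k} (range n))" for k
  proof -
    have "above {n k} (range n) \<subseteq> V (Suc k)"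
    proof
      fix m assume "m \<in> above {n k} (range n)"
      then obtain j where "m = n j" "n k < n j"
        unfolding above_def by auto
      then show "m \<in> V (Suc k)"
        using strict_mono_less[OF sm] V_antimono[of "Suc k" j] n[of j] by auto
    qed
    then show ?thesis
      using hered[OF V_step(2)] by blast
  qed
  moreover have "range n \<subseteq> Y"
    using n V by blast
  moreover have "infinite (range n)"
    using range_inj_infinite strict_mono_imp_inj_on[OF sm] by blast
  ultimately show ?thesis by blast
qed

text \<open>The common scheme of the Nash-Williams arguments below: a property of a prefix and a set of
  continuations that holds at the members of the front, and holds at an inner node after thinning
  whenever it holds at all its children, holds at every prefix after thinning.\<close>
lemma front_tree_fusion:
  assumes fr: "front F X"
    and hered: "\<And>u Y Y'. \<Phi> u Y \<Longrightarrow> Y' \<subseteq> Y \<Longrightarrow> \<Phi> u Y'"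
    and leaf: "\<And>u Y. u \<in> F \<Longrightarrow> \<Phi> u Y"
    and node: "\<And>u Z. u \<in> prefixes F \<Longrightarrow> u \<notin> F \<Longrightarrow> Z \<subseteq> above u X \<Longrightarrow> infinite Z \<Longrightarrow>
      (\<forall>n\<in>Z. \<Phi> (insert n u) (above {n} Z)) \<Longrightarrow> \<exists>Z'\<subseteq>Z. infinite Z' \<and> \<Phi> u Z'"
  shows "u \<in> prefixes F \<Longrightarrow> Y \<subseteq> above u X \<Longrightarrow> infinite Y \<Longrightarrow> \<exists>Y'\<subseteq>Y. infinite Y' \<and> \<Phi> u Y'"
  using wf_prefix_ext[OF fr]
proof (induction u arbitrary: Y rule: wf_induct_rule)
  case (less u)
  show ?case
  proof (cases "u \<in> F")
    case True
    then show ?thesis using leaf less.prems(3) by blast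
  next
    case False
    have "\<exists>Z\<subseteq>Y. infinite Z \<and> (\<forall>n\<in>Z. \<Phi> (insert n u) (above {n} Z))"
    proof (rule fusion[OF less.prems(3)])
      fix n W assume nW: "n \<in> Y" "W \<subseteq> Y" "infinite W"
      then have n: "n \<in> X" "\<forall>x\<in>u. x < n"
        using less.prems(2) unfolding above_def by auto
      note child = front_prefix_child[OF fr less.prems(1) False n]
      have "above {n} W \<subseteq> above (insert n u) X"
        using nW less.prems(2) unfolding above_def by auto
      moreover have "infinite (above {n} W)"
        using infinite_above[OF nW(3), of "{n}"] by simp
      ultimately
      obtain W' where "W' \<subseteq> above {n} W" "infinite W'" "\<Phi> (insert n u) W'"
        using less.IH[OF child(2) child(1)] by blast
      then show "\<exists>W'\<subseteq>W. infinite W' \<and> \<Phi> (insert n u) W'"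
        using above_subset by blast
    qed (rule hered)
    then obtain Z where Z: "Z \<subseteq> Y" "infinite Z" "\<forall>n\<in>Z. \<Phi> (insert n u) (above {n} Z)"
      by blast
    then have "Z \<subseteq> above u X"
      using less.prems(2) by blast
    then obtain Z' where "Z' \<subseteq> Z" "infinite Z'" "\<Phi> u Z'"
      using node[OF less.prems(1) False _ Z(2,3)] by blast
    then show ?thesis
      using Z(1) by blast
  qed
qed

theorem front_partition:
  fixes c :: "nat set \<Rightarrow> bool"
  assumes fr: "front F X"
  shows "\<exists>Y\<subseteq>X. infinite Y \<and> ((\<forall>u\<in>F. u \<subseteq> Y \<longrightarrow> c u) \<or> (\<forall>u\<in>F. u \<subseteq> Y \<longrightarrow> \<not> c u))"
proof -
  define hom where "hom w Y i \<longleftrightarrow> (\<forall>u\<in>F. init_seg w u \<and> u \<subseteq> w \<union> Y \<longrightarrow> c u = i)" for w Y i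
  have hom_mono: "hom w Y' i" if "hom w Y i" "Y' \<subseteq> Y" for w Y Y' i
    using that unfolding hom_def by blast
  have "\<exists>Y'\<subseteq>X. infinite Y' \<and> (hom {} Y' True \<or> hom {} Y' False)"
  proof (rule front_tree_fusion[OF fr])
    show "hom u Y' True \<or> hom u Y' False" if "hom u Y True \<or> hom u Y False" "Y' \<subseteq> Y" for u Y Y'
      using that hom_mono by blast
    show "hom u Y True \<or> hom u Y False" if "u \<in> F" for u Y
    proof -
      have "hom u Y (c u)"
        using that front_thin[OF fr] unfolding hom_def by blast
      then show ?thesis
        by (cases "c u") auto
    qed
  next
    fix w Z
    assume w: "w \<notin> F" and Z: "infinite Z" "\<forall>n\<in>Z. hom (insert n w) (above {n} Z) True \<or>
      hom (insert n w) (above {n} Z) False"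
    define Zi where "Zi i = {n\<in>Z. hom (insert n w) (above {n} Z) i}" for i
    have "Z \<subseteq> Zi True \<union> Zi False"
      using Z(2) unfolding Zi_def by blast
    then obtain i where i: "infinite (Zi i)"
      using Z(1) by (metis finite_Un finite_subset)
    have "c u = i" if u: "u \<in> F" "init_seg w u" "u \<subseteq> w \<union> Zi i" for u
    proof -
      have "w \<noteq> u"
        using u(1) w by blast
      note seg = init_seg_next[OF u(2) this front_finite[OF fr u(1)]]
      define m where "m = Min (u - w)"
      have "m \<in> Zi i"
        using seg(1,2) u(3) unfolding m_def by blast
      then have "hom (insert m w) (above {m} Z) i"
        unfolding Zi_def by blast
      moreover have "u \<subseteq> insert m w \<union> above {m} Z"
        using seg(5) u(3) unfolding m_def Zi_def above_def by auto
      ultimately show ?thesis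
        using seg(4) u(1) unfolding m_def hom_def by simp
    qed
    then have "hom w (Zi i) i"
      unfolding hom_def by blast
    moreover have "Zi i \<subseteq> Z"
      unfolding Zi_def by blast
    ultimately show "\<exists>Z'\<subseteq>Z. infinite Z' \<and> (hom w Z' True \<or> hom w Z' False)"
      using i by (cases i) auto
  qed (use front_empty_prefix[OF fr] front_infinite[OF fr] in auto)
  then obtain Y i where "Y \<subseteq> X" "infinite Y" "hom {} Y i"
    by blast
  then show ?thesis
    unfolding hom_def by (cases i) auto
qed

lemma front_restrict:
  assumes fr: "front F X" and Y: "Y \<subseteq> X" "infinite Y"
  shows "front {u\<in>F. u \<subseteq> Y} Y"
proof -
  have "\<forall>s\<in>{u\<in>F. u \<subseteq> Y}. finite s \<and> s \<subseteq> Y"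
    using front_finite[OF fr] by blast
  moreover have "\<forall>s\<in>{u\<in>F. u \<subseteq> Y}. \<forall>t\<in>{u\<in>F. u \<subseteq> Y}. init_seg s t \<longrightarrow> s = t"
    using front_thin[OF fr] by blast
  moreover have "\<forall>Z. Z \<subseteq> Y \<and> infinite Z \<longrightarrow> (\<exists>s\<in>{u\<in>F. u \<subseteq> Y}. init_seg s Z)"
  proof (intro allI impI)
    fix Z assume Z: "Z \<subseteq> Y \<and> infinite Z"
    then obtain s where "s \<in> F" "init_seg s Z"
      using front_init_seg[OF fr, of Z] Y(1) by blast
    then show "\<exists>s\<in>{u\<in>F. u \<subseteq> Y}. init_seg s Z"
      using init_seg_subset Z by blast
  qed
  ultimately show ?thesis
    unfolding front_def using Y(2) by (intro conjI) assumption+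
qed

lemma thin_front_barrier:
  assumes fr: "front F X" and empty: "{} \<notin> F" and thin: "\<forall>s\<in>F. \<forall>t\<in>F. \<not> s \<subset> t"
  shows "barrier F"
proof -
  have "infinite F"
  proof
    assume "finite F"
    then have "finite (\<Union>F)"
      using front_finite[OF fr] by blast
    then obtain s where s: "s \<in> F" "init_seg s (above (\<Union>F) X)"
      using front_init_seg[OF fr above_subset infinite_above[OF front_infinite[OF fr]]] by blast
    moreover have "s \<noteq> {}"
      using s(1) empty by auto
    then obtain x where "x \<in> s"
      by blast
    ultimately show False
      using init_seg_subset[OF s(2)] unfolding above_def by blast
  qed
  moreover have "\<forall>s\<in>F. finite s"
    using front_finite[OF fr] by blast
  moreover have "\<forall>Z. Z \<subseteq> \<Union>F \<and> infinite Z \<longrightarrow> (\<exists>s\<in>F. s \<noteq> {} \<and> init_seg s Z)"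
  proof (intro allI impI)
    fix Z assume Z: "Z \<subseteq> \<Union>F \<and> infinite Z"
    moreover have "\<Union>F \<subseteq> X"
      using front_subset[OF fr] by blast
    ultimately obtain s where "s \<in> F" "init_seg s Z"
      using front_init_seg[OF fr, of Z] by blast
    moreover have "s \<noteq> {}"
      using \<open>s \<in> F\<close> empty by auto
    ultimately show "\<exists>s\<in>F. s \<noteq> {} \<and> init_seg s Z"
      by blast
  qed
  ultimately show ?thesis
    unfolding barrier_def using thin by (intro conjI) assumption+
qed

text \<open>Colour the members of the front by whether they properly contain another member: on a
  homogeneous set the colour must be false, since a member of minimal size contains none.\<close>
lemma front_barrier_subset:
  assumes fr: "front F X" and empty: "{} \<notin> F"
  obtains Y where "Y \<subseteq> X" "infinite Y" "barrier {u\<in>F. u \<subseteq> Y}"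
proof -
  obtain Y where Y: "Y \<subseteq> X" "infinite Y"
    and hom: "(\<forall>u\<in>F. u \<subseteq> Y \<longrightarrow> (\<exists>v\<in>F. v \<subset> u)) \<or> (\<forall>u\<in>F. u \<subseteq> Y \<longrightarrow> \<not> (\<exists>v\<in>F. v \<subset> u))"
    using front_partition[OF fr, of "\<lambda>u. \<exists>v\<in>F. v \<subset> u"] by blast
  define B where "B = {u\<in>F. u \<subseteq> Y}"
  have frB: "front B Y"
    unfolding B_def using front_restrict[OF fr Y] .
  obtain u0 where "u0 \<in> B"
    using front_init_seg[OF frB order_refl Y(2)] by blast
  then obtain u where u: "u \<in> B" and u_min: "\<And>v. v \<in> B \<Longrightarrow> card u \<le> card v"
    using ex_has_least_nat[of "\<lambda>u. u \<in> B" u0 card] by blast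
  have "\<not> (\<forall>u\<in>F. u \<subseteq> Y \<longrightarrow> (\<exists>v\<in>F. v \<subset> u))"
  proof
    assume "\<forall>u\<in>F. u \<subseteq> Y \<longrightarrow> (\<exists>v\<in>F. v \<subset> u)"
    then obtain v where v: "v \<in> F" "v \<subset> u"
      using u unfolding B_def by blast
    then have "v \<in> B"
      using u unfolding B_def by blast
    moreover have "card v < card u"
      using psubset_card_mono[OF front_finite[OF frB u] v(2)] .
    ultimately show False
      using u_min[of v] by simp
  qed
  then have "\<forall>s\<in>B. \<forall>t\<in>B. \<not> s \<subset> t"
    using hom unfolding B_def by blast
  moreover have "{} \<notin> B"
    using empty unfolding B_def by blast
  ultimately have "barrier B"
    using thin_front_barrier[OF frB] by blast
  then show ?thesis
    using that Y unfolding B_def by blast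
qed

text \<open>Among the members extending w, first minimise the element following w, then recurse on the
  prefix extended by it.\<close>
lemma front_lex_least:
  assumes fr: "front F X"
  shows "w \<in> prefixes F \<Longrightarrow> S \<subseteq> {s\<in>F. init_seg w s} \<Longrightarrow> S \<noteq> {} \<Longrightarrow>
    \<exists>m\<in>S. \<forall>s\<in>S. s = m \<or>
      (sorted_list_of_set m, sorted_list_of_set s) \<in> lexord {(m, n). m < n}"
  using wf_prefix_ext[OF fr]
proof (induction w arbitrary: S rule: wf_induct_rule)
  case (less w)
  show ?case
  proof (cases "w \<in> F")
    case True
    then show ?thesis
      using less.prems(2,3) front_thin[OF fr] by blast
  next
    case False
    define nx where "nx s = Min (s - w)" for s
    have S: "init_seg w s" "w \<noteq> s" "finite s" "s \<in> F" if "s \<in> S" for s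
      using that less.prems(2) False front_finite[OF fr] by auto
    obtain s0 where s0: "s0 \<in> S" and s0_least: "\<And>s. s \<in> S \<Longrightarrow> nx s0 \<le> nx s"
      using less.prems(3) ex_has_least_nat[of "\<lambda>s. s \<in> S" _ nx] by blast
    define v where "v = insert (nx s0) w"
    note next0 = init_seg_next[OF S(1-3)[OF s0], folded nx_def]
    have v: "v \<in> prefixes F"
      using next0(4) S(4)[OF s0] unfolding v_def prefixes_def by blast
    then have "(v, w) \<in> prefix_ext F"
      using next0(2,3) init_seg_insert_greater[OF init_seg_refl] unfolding v_def prefix_ext_def by auto
    moreover have "{s\<in>S. nx s = nx s0} \<subseteq> {s\<in>F. init_seg v s}"
    proof
      fix s assume "s \<in> {s\<in>S. nx s = nx s0}"
      then show "s \<in> {s\<in>F. init_seg v s}"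
        using init_seg_next(4)[OF S(1-3)[of s]] S(4)[of s] unfolding v_def nx_def by auto
    qed
    ultimately obtain m where m: "m \<in> S" "nx m = nx s0"
      and m_least: "\<forall>s\<in>S. nx s = nx s0 \<longrightarrow> s = m \<or>
        (sorted_list_of_set m, sorted_list_of_set s) \<in> lexord {(m, n). m < n}"
      using less.IH[OF _ v, of "{s\<in>S. nx s = nx s0}"] s0 by blast
    have "s = m \<or> (sorted_list_of_set m, sorted_list_of_set s) \<in> lexord {(m, n). m < n}"
      if s: "s \<in> S" "nx s \<noteq> nx s0" for s
    proof -
      obtain xs where "sorted_list_of_set m = sorted_list_of_set w @ nx s0 # xs"
        using sorted_list_of_set_next[OF S(1-3)[OF m(1)]] m(2) unfolding nx_def by auto
      moreover obtain ys where "sorted_list_of_set s = sorted_list_of_set w @ nx s # ys"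
        using sorted_list_of_set_next[OF S(1-3)[OF s(1)]] unfolding nx_def by auto
      moreover have "nx s0 < nx s"
        using s s0_least[OF s(1)] by simp
      ultimately show ?thesis
        by (simp add: lexord_append_left_rightI)
    qed
    then show ?thesis
      using m m_least by blast
  qed
qed

lemma Field_lex_rel: "Field (lex_rel F) = F"
  unfolding lex_rel_def Field_def by auto

lemma front_lex_rel_Well_order:
  assumes fr: "front F X"
  shows "Well_order (lex_rel F)"
proof -
  let ?L = "sorted_list_of_set" and ?lt = "{(m, n). m < (n::nat)}"
  have lex_irrefl: "(xs, xs) \<notin> lexord ?lt" for xs
    by (rule lexord_irreflexive) simp
  have lex_trans: "trans (lexord ?lt)"
    by (rule lexord_transI) (auto simp: trans_def)
  have "(xs, ys) \<in> lexord ?lt \<or> xs = ys \<or> (ys, xs) \<in> lexord ?lt" for xs ys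
    by (rule lexord_linear) auto
  moreover have "s = t" if "s \<in> F" "t \<in> F" "?L s = ?L t" for s t
    using that front_finite[OF fr] by (metis set_sorted_list_of_set)
  ultimately have "total_on F (lex_rel F)"
    unfolding total_on_def lex_rel_def by blast
  moreover have "refl_on F (lex_rel F)"
    unfolding refl_on_def lex_rel_def by auto
  moreover have "trans (lex_rel F)"
    using lex_trans unfolding lex_rel_def trans_def by blast
  moreover have "antisym (lex_rel F)"
    using lex_trans lex_irrefl unfolding lex_rel_def trans_def antisym_def by blast
  moreover have "lex_rel F \<subseteq> F \<times> F"
    unfolding lex_rel_def by auto
  ultimately have lin: "Linear_order (lex_rel F)"
    unfolding Field_lex_rel linear_order_on_def partial_order_on_def preorder_on_def by simp
  show ?thesis
  proof (subst Linear_order_Well_order_iff[OF lin], unfold Field_lex_rel, intro allI impI)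
    fix A assume "A \<subseteq> F" "A \<noteq> {}"
    then show "\<exists>a\<in>A. \<forall>a'\<in>A. (a, a') \<in> lex_rel F"
      using front_lex_least[OF fr front_empty_prefix[OF fr], of A] unfolding lex_rel_def by auto
  qed
qed

lemma bqo_onI:
  assumes "\<And>B h. barrier B \<Longrightarrow> h ` B \<subseteq> A \<Longrightarrow> good le B h"
  shows "bqo_on A le"
  using assms unfolding bqo_on_def alpha_bqo_def by blast

text \<open>Every barrier has a countable order type, so a bqo is good on every barrier.\<close>
lemma bqo_on_good:
  assumes bqo: "bqo_on A le" and B: "barrier B" and h: "h ` B \<subseteq> A"
  shows "good le B h"
proof -
  have wo: "Well_order (lex_rel B)"
    using front_lex_rel_Well_order[OF barrier_front[OF B]] .
  have "Field (lex_rel B) \<subseteq> {s. finite s}"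
    using B unfolding Field_lex_rel barrier_def by blast
  then have "countable (Field (lex_rel B))"
    using countable_Collect_finite countable_subset by blast
  then have inj: "inj_on (to_nat_on (Field (lex_rel B))) (Field (lex_rel B))"
    by (rule inj_on_to_nat_on)
  define \<alpha> where "\<alpha> = dir_image (lex_rel B) (to_nat_on (Field (lex_rel B)))"
  have "Well_order \<alpha>"
    unfolding \<alpha>_def using Well_order_dir_image[OF wo inj] .
  moreover have "(lex_rel B, \<alpha>) \<in> ordLeq"
    unfolding \<alpha>_def using dir_image_ordIso[OF wo inj] ordIso_iff_ordLeq by blast
  ultimately show ?thesis
    using bqo B h unfolding bqo_on_def alpha_bqo_def by blast
qed

section \<open>Sequences in a well-quasi-order\<close>

definition downset :: "'a::order set \<Rightarrow> 'a set \<Rightarrow> 'a set" where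
  "downset P S = {x\<in>P. \<exists>y\<in>S. x \<le> y}"

lemma downset_mono: "S \<subseteq> T \<Longrightarrow> downset P S \<subseteq> downset P T"
  unfolding downset_def by blast

lemma dom_le_downset: "dom_le C D \<Longrightarrow> downset P C \<subseteq> downset P D"
  unfolding dom_le_def downset_def by (blast intro: order_trans)

lemma downset_S_omega_not_principal:
  assumes C: "C \<in> S_omega P" and p: "p \<in> P"
  shows "downset P {p} \<noteq> downset P C"
proof
  assume eq: "downset P {p} = downset P C"
  obtain c :: "nat \<Rightarrow> _" where c: "C = range c" "\<forall>i. c i \<in> P" "strict_mono c"
    using C unfolding S_omega_def by blast
  have "p \<in> downset P C"
    using p eq unfolding downset_def by blast
  then obtain i where "p \<le> c i"
    unfolding downset_def c(1) by auto
  moreover have "c (Suc i) \<le> p"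
    using eq c unfolding downset_def by blast
  moreover have "c i < c (Suc i)"
    using c(3) by (simp add: strict_mono_def)
  ultimately show False by simp
qed

lemma wqo_on_not_descending:
  fixes P :: "'a::order set" and q :: "nat \<Rightarrow> 'a"
  assumes wqo: "wqo_on P (\<le>)" and Y: "infinite Y" and qP: "q ` Y \<subseteq> P"
  shows "\<exists>a\<in>Y. \<exists>b\<in>Y. a < b \<and> \<not> q b < q a"
proof -
  have "wfp_on P (\<lambda>x y. x \<le> y \<and> \<not> y \<le> x)"
    using wqo unfolding wqo_on_def by blast
  moreover have "q ` Y \<noteq> {}"
    using Y infinite_imp_nonempty by auto
  ultimately obtain z where z: "z \<in> q ` Y" and min: "\<forall>y. (y \<le> z \<and> \<not> z \<le> y) \<longrightarrow> y \<notin> q ` Y"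
    using qP unfolding wfp_on_iff_ex_minimal by blast
  then obtain a where a: "a \<in> Y" "z = q a"
    by blast
  obtain b where b: "b \<in> Y" "a < b"
    using Y unfolding infinite_nat_iff_unbounded by blast
  then have "\<not> q b < q a"
    using min a by (auto simp: less_le_not_le)
  then show ?thesis
    using a b by blast
qed

lemma wqo_on_not_antichain:
  fixes P :: "'a::order set" and q :: "nat \<Rightarrow> 'a"
  assumes wqo: "wqo_on P (\<le>)" and Y: "infinite Y" and qP: "q ` Y \<subseteq> P"
  shows "\<exists>a\<in>Y. \<exists>b\<in>Y. a \<noteq> b \<and> q a \<le> q b"
proof (rule ccontr)
  assume "\<not> ?thesis"
  then have antichain: "\<not> q a \<le> q b" if "a \<in> Y" "b \<in> Y" "a \<noteq> b" for a b
    using that by blast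
  have "inj_on q Y"
  proof (rule inj_onI)
    fix a b assume "a \<in> Y" "b \<in> Y" "q a = q b"
    then show "a = b" using antichain[of a b] by auto
  qed
  then have "infinite (q ` Y)"
    using Y finite_imageD by blast
  moreover have "\<forall>x\<in>q ` Y. \<forall>y\<in>q ` Y. x \<noteq> y \<longrightarrow> \<not> x \<le> y"
    using antichain by blast
  ultimately have "\<exists>C. C \<subseteq> P \<and> infinite C \<and> (\<forall>x\<in>C. \<forall>y\<in>C. x \<noteq> y \<longrightarrow> \<not> x \<le> y)"
    using qP by (intro exI[of _ "q ` Y"]) simp
  then show False
    using wqo unfolding wqo_on_def by (elim conjE notE)
qed

text \<open>By Ramsey's theorem a bad sequence would contain either an infinite strictly descending
  subsequence or an infinite antichain.\<close>
lemma wqo_on_good_pair: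
  fixes P :: "'a::order set" and q :: "nat \<Rightarrow> 'a"
  assumes wqo: "wqo_on P (\<le>)" and Z: "infinite Z" and qP: "q ` Z \<subseteq> P"
  shows "\<exists>a\<in>Z. \<exists>b\<in>Z. a < b \<and> q a \<le> q b"
proof (rule ccontr)
  assume bad: "\<not> ?thesis"
  define col where "col S = (if q (Max S) \<le> q (Min S) then 0 else 1::nat)" for S :: "nat set"
  have "\<forall>x\<in>Z. \<forall>y\<in>Z. x \<noteq> y \<longrightarrow> col {x, y} < 2"
    by (simp add: col_def)
  from Ramsey2[OF Z this] obtain Y t where Y: "Y \<subseteq> Z" "infinite Y" "t < 2"
    and hom: "\<forall>x\<in>Y. \<forall>y\<in>Y. x \<noteq> y \<longrightarrow> col {x, y} = t"
    by blast
  have YP: "q ` Y \<subseteq> P"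
    using Y(1) qP by blast
  have col: "col {a, b} = (if q b \<le> q a then 0 else 1)" if "a < b" for a b
  proof -
    have "Max {a, b} = b" "Min {a, b} = a"
      using that by auto
    then show ?thesis
      by (simp add: col_def)
  qed
  have not_le: "\<not> q a \<le> q b" if "a \<in> Y" "b \<in> Y" "a < b" for a b
    using bad Y that by blast
  show False
  proof (cases "t = 0")
    case True
    have "q b < q a" if "a \<in> Y" "b \<in> Y" "a < b" for a b
      using hom that True col[OF that(3)] not_le[OF that] by (auto simp: less_le_not_le split: if_splits)
    then show False
      using wqo_on_not_descending[OF wqo Y(2) YP] by blast
  next
    case False
    then have "t = 1"
      using Y(3) by auto
    have "\<not> q a \<le> q b" if "a \<in> Y" "b \<in> Y" "a \<noteq> b" for a b
    proof (cases "a < b")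
      case True
      then show ?thesis using not_le that by blast
    next
      case False
      then have "b < a"
        using that by auto
      have "col {b, a} = 1"
        using bspec[OF bspec[OF hom that(2)] that(1)] that(3) \<open>t = 1\<close> by simp
      then show ?thesis
        unfolding col[OF \<open>b < a\<close>] by (simp split: if_splits)
    qed
    then show False
      using wqo_on_not_antichain[OF wqo Y(2) YP] by blast
  qed
qed

text \<open>The downward closures of the infinite subsequences cannot decrease forever: witnesses of
  the strict decreases would form a bad sequence.\<close>
lemma wqo_on_downset_stable:
  fixes P :: "'a::order set" and q :: "nat \<Rightarrow> 'a"
  assumes wqo: "wqo_on P (\<le>)" and Z: "infinite Z"
  shows "\<exists>Z0\<subseteq>Z. infinite Z0 \<and> (\<forall>Y\<subseteq>Z0. infinite Y \<longrightarrow> downset P (q ` Y) = downset P (q ` Z0))"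
proof (rule ccontr)
  assume "\<not> ?thesis"
  then obtain nxt where nxt: "\<And>Z0. Z0 \<subseteq> Z \<Longrightarrow> infinite Z0 \<Longrightarrow>
      nxt Z0 \<subseteq> Z0 \<and> infinite (nxt Z0) \<and> downset P (q ` nxt Z0) \<noteq> downset P (q ` Z0)"
    by metis
  define Zs where "Zs = rec_nat Z (\<lambda>_. nxt)"
  have Zs_Suc: "Zs (Suc i) = nxt (Zs i)" for i
    by (simp add: Zs_def)
  have Zs: "Zs i \<subseteq> Z \<and> infinite (Zs i)" for i
    by (induction i) (use Z nxt Zs_Suc in \<open>auto simp: Zs_def\<close>)
  have Zs_step: "Zs (Suc i) \<subseteq> Zs i" "downset P (q ` Zs (Suc i)) \<noteq> downset P (q ` Zs i)" for i
    using nxt Zs Zs_Suc by auto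
  have Zs_antimono: "Zs j \<subseteq> Zs i" if "i \<le> j" for i j
    using that
  proof (induction j rule: dec_induct)
    case (step j)
    then show ?case using Zs_step(1)[of j] by blast
  qed simp
  have "\<exists>y. y \<in> downset P (q ` Zs i) \<and> y \<notin> downset P (q ` Zs (Suc i))" for i
    using Zs_step[of i] downset_mono[OF image_mono[OF Zs_step(1)[of i]], of P q] by blast
  then obtain x where x: "\<And>i. x i \<in> downset P (q ` Zs i) \<and> x i \<notin> downset P (q ` Zs (Suc i))"
    by metis
  have "range x \<subseteq> P"
    using x unfolding downset_def by blast
  then obtain i j where ij: "i < j" "x i \<le> x j"
    using wqo_on_good_pair[OF wqo, of UNIV x] by auto
  have "x j \<in> downset P (q ` Zs (Suc i))"
    using x[of j] downset_mono[OF image_mono[OF Zs_antimono[of "Suc i" j]]] ij(1) by auto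
  then have "x i \<in> downset P (q ` Zs (Suc i))"
    using x[of i] ij(2) unfolding downset_def by (blast intro: order_trans)
  then show False
    using x by blast
qed

lemma directed_cofinal_chain:
  fixes D :: "'a::order set" and a :: "nat \<Rightarrow> 'a"
  assumes a: "\<And>k. a k \<in> D"
    and directed: "\<And>x y. x \<in> D \<Longrightarrow> y \<in> D \<Longrightarrow> \<exists>z\<in>D. x \<le> z \<and> y \<le> z"
    and no_max: "\<And>x. x \<in> D \<Longrightarrow> \<exists>y\<in>D. \<not> y \<le> x"
  shows "\<exists>c. strict_mono c \<and> range c \<subseteq> D \<and> (\<forall>k. a k \<le> c (Suc k))"
proof -
  have "\<exists>z\<in>D. x < z \<and> y \<le> z" if xy: "x \<in> D" "y \<in> D" for x y
  proof -
    obtain w where w: "w \<in> D" "x \<le> w" "y \<le> w"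
      using directed[OF xy] by blast
    obtain v where v: "v \<in> D" "\<not> v \<le> w"
      using no_max[OF w(1)] by blast
    obtain z where "z \<in> D" "w \<le> z" "v \<le> z"
      using directed[OF w(1) v(1)] by blast
    then show ?thesis
      using w v by (metis order.strict_iff_not order_trans)
  qed
  then obtain up where up: "\<And>x y. x \<in> D \<Longrightarrow> y \<in> D \<Longrightarrow> up x y \<in> D \<and> x < up x y \<and> y \<le> up x y"
    by metis
  define c where "c = rec_nat (a 0) (\<lambda>k ck. up ck (a k))"
  have c_Suc: "c (Suc k) = up (c k) (a k)" for k
    by (simp add: c_def)
  have c: "c k \<in> D" for k
    by (induction k) (use a up c_Suc in \<open>auto simp: c_def\<close>)
  then have "c k < c (Suc k) \<and> a k \<le> c (Suc k)" for k
    using up a c_Suc by simp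
  then show ?thesis
    using c by (auto simp: strict_mono_Suc_iff)
qed

lemma stable_downset_principal:
  fixes P :: "'a::order set" and q :: "nat \<Rightarrow> 'a"
  assumes stable: "\<And>Y. Y \<subseteq> Z \<Longrightarrow> infinite Y \<Longrightarrow> downset P (q ` Y) = downset P (q ` Z)"
    and Z: "infinite Z" and qP: "q ` Z \<subseteq> P"
    and p: "p \<in> downset P (q ` Z)" "\<And>x. x \<in> downset P (q ` Z) \<Longrightarrow> x \<le> p"
  shows "infinite {n\<in>Z. q n = p}"
proof -
  have below: "q n \<le> p" if "n \<in> Z" for n
    using p(2) that qP unfolding downset_def by blast
  have "finite {n\<in>Z. q n \<noteq> p}"
  proof (rule ccontr)
    assume "infinite {n\<in>Z. q n \<noteq> p}"
    then have "p \<in> downset P (q ` {n\<in>Z. q n \<noteq> p})"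
      using stable[of "{n\<in>Z. q n \<noteq> p}"] p(1) by auto
    then obtain n where "n \<in> Z" "q n \<noteq> p" "p \<le> q n"
      unfolding downset_def by auto
    then show False
      using below[of n] by simp
  qed
  moreover have "Z = {n\<in>Z. q n \<noteq> p} \<union> {n\<in>Z. q n = p}"
    by blast
  ultimately show ?thesis
    using Z by (metis finite_Un)
qed

lemma stable_downset_directed:
  fixes P :: "'a::order set" and q :: "nat \<Rightarrow> 'a"
  assumes stable: "\<And>Y. Y \<subseteq> Z \<Longrightarrow> infinite Y \<Longrightarrow> downset P (q ` Y) = downset P (q ` Z)"
    and Z: "infinite Z" and qP: "q ` Z \<subseteq> P"
    and xy: "x \<in> downset P (q ` Z)" "y \<in> downset P (q ` Z)"
  shows "\<exists>z\<in>downset P (q ` Z). x \<le> z \<and> y \<le> z"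
proof (rule ccontr)
  have hit: "\<exists>n\<in>Y. z \<le> q n" if "z \<in> downset P (q ` Z)" "Y \<subseteq> Z" "infinite Y" for z Y
    using stable[OF that(2,3)] that(1) unfolding downset_def by auto
  assume "\<not> ?thesis"
  then have "Z = {n\<in>Z. \<not> x \<le> q n} \<union> {n\<in>Z. \<not> y \<le> q n}"
    using qP xy unfolding downset_def by blast
  then have "infinite {n\<in>Z. \<not> x \<le> q n} \<or> infinite {n\<in>Z. \<not> y \<le> q n}"
    using Z by (metis infinite_Un)
  then show False
  proof
    assume "infinite {n\<in>Z. \<not> x \<le> q n}"
    then show False
      using hit[OF xy(1), of "{n\<in>Z. \<not> x \<le> q n}"] by auto
  next
    assume "infinite {n\<in>Z. \<not> y \<le> q n}"
    then show False
      using hit[OF xy(2), of "{n\<in>Z. \<not> y \<le> q n}"] by auto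
  qed
qed

lemma directed_downset_S_omega:
  fixes P :: "'a::order set" and a :: "nat \<Rightarrow> 'a"
  assumes a: "\<And>k. a k \<in> P"
    and directed: "\<And>x y. x \<in> downset P (range a) \<Longrightarrow> y \<in> downset P (range a) \<Longrightarrow>
      \<exists>z\<in>downset P (range a). x \<le> z \<and> y \<le> z"
    and no_max: "\<And>x. x \<in> downset P (range a) \<Longrightarrow> \<exists>y\<in>downset P (range a). \<not> y \<le> x"
  shows "\<exists>C\<in>S_omega P. downset P C = downset P (range a)"
proof -
  have "a k \<in> downset P (range a)" for k
    using a unfolding downset_def by blast
  then obtain c where c: "strict_mono c" "range c \<subseteq> downset P (range a)" "\<And>k. a k \<le> c (Suc k)"
    using directed_cofinal_chain[of a "downset P (range a)"] directed no_max by blast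
  then have "range c \<in> S_omega P"
    unfolding S_omega_def downset_def by blast
  moreover have "downset P (range c) = downset P (range a)"
  proof
    show "downset P (range c) \<subseteq> downset P (range a)"
      using c(2) unfolding downset_def by (blast intro: order_trans)
    show "downset P (range a) \<subseteq> downset P (range c)"
      using c(3) unfolding downset_def by (blast intro: order_trans)
  qed
  ultimately show ?thesis
    by blast
qed

text \<open>Along a suitable infinite subsequence of a sequence in a wqo, the downward closures of all
  infinite subsequences agree; this common downward closure is an ideal, which is either principal
  (and then the subsequence is eventually constant) or generated by a strictly increasing chain.\<close>
lemma wqo_on_limit:
  fixes P :: "'a::order set" and q :: "nat \<Rightarrow> 'a"
  assumes wqo: "wqo_on P (\<le>)" and Z: "infinite Z" and qP: "q ` Z \<subseteq> P"
  shows "\<exists>Z'\<subseteq>Z. infinite Z' \<and> ((\<exists>p. \<forall>n\<in>Z'. q n = p) \<or>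
           (\<exists>C\<in>S_omega P. \<forall>Y\<subseteq>Z'. infinite Y \<longrightarrow> downset P (q ` Y) = downset P C))"
proof -
  obtain Z0 where Z0: "Z0 \<subseteq> Z" "infinite Z0"
    and stable: "\<And>Y. Y \<subseteq> Z0 \<Longrightarrow> infinite Y \<Longrightarrow> downset P (q ` Y) = downset P (q ` Z0)"
    using wqo_on_downset_stable[where q=q, OF wqo Z] by blast
  have qP0: "q ` Z0 \<subseteq> P"
    using Z0(1) qP by blast
  show ?thesis
  proof (cases "\<exists>p\<in>downset P (q ` Z0). \<forall>x\<in>downset P (q ` Z0). x \<le> p")
    case True
    then obtain p where "p \<in> downset P (q ` Z0)" "\<And>x. x \<in> downset P (q ` Z0) \<Longrightarrow> x \<le> p"
      by blast
    then have "infinite {n\<in>Z0. q n = p}"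
      using stable_downset_principal[OF stable Z0(2) qP0] by blast
    then show ?thesis
      using Z0(1) by (intro exI[of _ "{n\<in>Z0. q n = p}"]) auto
  next
    case False
    obtain n0 where n0: "n0 \<in> Z0"
      using Z0(2) infinite_imp_nonempty by blast
    define a where "a k = (if k \<in> Z0 then q k else q n0)" for k
    have "range a = q ` Z0"
      using n0 unfolding a_def by auto
    moreover have "a k \<in> P" for k
      using qP0 n0 unfolding a_def by auto
    ultimately obtain C where C: "C \<in> S_omega P" "downset P C = downset P (q ` Z0)"
      using directed_downset_S_omega[of a P] stable_downset_directed[OF stable Z0(2) qP0] False
      by auto
    have "downset P (q ` Y) = downset P C" if "Y \<subseteq> Z0" "infinite Y" for Y
      using stable[OF that] C(2) by simp
    then show ?thesis
      using Z0 C(1) by blast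
  qed
qed

section \<open>Classifying the nodes of a barrier\<close>

locale barrier_map =
  fixes P :: "'a::order set" and B :: "nat set set" and f :: "nat set \<Rightarrow> 'a"
  assumes wqo: "wqo_on P (\<le>)" and barrier: "barrier B" and f_into: "f ` B \<subseteq> P"
begin

lemma front_B: "front B (\<Union>B)"
  using barrier by (rule barrier_front)

lemma thin_B: "s \<in> B \<Longrightarrow> t \<in> B \<Longrightarrow> \<not> s \<subset> t"
  using barrier unfolding barrier_def by blast

lemma empty_notin_B: "{} \<notin> B"
proof
  assume "{} \<in> B"
  have "infinite B"
    using barrier unfolding barrier_def by blast
  then have "B - {{}} \<noteq> {}"
    by (metis finite.emptyI finite_Diff2 finite_insert)
  then obtain t where "t \<in> B" "t \<noteq> {}"
    by blast
  then show False
    using thin_B[OF \<open>{} \<in> B\<close>] by blast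
qed

lemma prefix_child_B:
  assumes "u \<in> prefixes B" "u \<notin> B" "n \<in> \<Union>B" "\<forall>x\<in>u. x < n"
  shows "insert n u \<in> prefixes B" "(insert n u, u) \<in> prefix_ext B"
  using front_prefix_child[OF front_B assms] by blast+

text \<open>const_node u Y p: f takes the value p on every member of B that extends u by elements
  of Y.\<close>
inductive const_node :: "nat set \<Rightarrow> nat set \<Rightarrow> 'a \<Rightarrow> bool" where
  leaf: "u \<in> B \<Longrightarrow> const_node u Y (f u)"
| node: "u \<notin> B \<Longrightarrow> \<forall>n\<in>Y. const_node (insert n u) (above {n} Y) p \<Longrightarrow> const_node u Y p"

definition limit_node :: "nat set \<Rightarrow> nat set \<Rightarrow> 'a set \<Rightarrow> bool" where
  "limit_node u Y C \<longleftrightarrow> u \<notin> B \<and> C \<in> S_omega P \<and>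
     (\<exists>q. (\<forall>n\<in>Y. const_node (insert n u) (above {n} Y) (q n)) \<and>
          (\<forall>Y'\<subseteq>Y. infinite Y' \<longrightarrow> downset P (q ` Y') = downset P C))"

inductive dead_node :: "nat set \<Rightarrow> nat set \<Rightarrow> bool" where
  "u \<notin> B \<Longrightarrow> \<forall>n\<in>Y. (\<exists>C. limit_node (insert n u) (above {n} Y) C) \<or>
     dead_node (insert n u) (above {n} Y) \<Longrightarrow> dead_node u Y"

lemma const_node_mono: "const_node u Y p \<Longrightarrow> Y' \<subseteq> Y \<Longrightarrow> const_node u Y' p"
proof (induction arbitrary: Y' rule: const_node.induct)
  case (node u Y p)
  then show ?case
    using above_mono[OF node.prems] by (blast intro: const_node.node)
qed (rule const_node.leaf)

lemma limit_node_mono: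
  assumes "limit_node u Y C" "Y' \<subseteq> Y"
  shows "limit_node u Y' C"
proof -
  obtain q where "u \<notin> B" "C \<in> S_omega P"
    and q: "\<forall>n\<in>Y. const_node (insert n u) (above {n} Y) (q n)"
    and q_limit: "\<forall>Y''\<subseteq>Y. infinite Y'' \<longrightarrow> downset P (q ` Y'') = downset P C"
    using assms(1) unfolding limit_node_def by blast
  moreover have "\<forall>n\<in>Y'. const_node (insert n u) (above {n} Y') (q n)"
  proof
    fix n assume "n \<in> Y'"
    then have "n \<in> Y"
      using assms(2) by blast
    then show "const_node (insert n u) (above {n} Y') (q n)"
      using const_node_mono[OF q[rule_format] above_mono[OF assms(2)]] by blast
  qed
  moreover have "\<forall>Y''\<subseteq>Y'. infinite Y'' \<longrightarrow> downset P (q ` Y'') = downset P C"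
    using q_limit assms(2) by blast
  ultimately show ?thesis
    unfolding limit_node_def by blast
qed

lemma dead_node_mono: "dead_node u Y \<Longrightarrow> Y' \<subseteq> Y \<Longrightarrow> dead_node u Y'"
proof (induction arbitrary: Y' rule: dead_node.induct)
  case (1 u Y)
  show ?case
  proof (rule dead_node.intros[OF "1.hyps"], intro ballI)
    fix n assume "n \<in> Y'"
    then have "n \<in> Y"
      using "1.prems" by blast
    have sub: "above {n} Y' \<subseteq> above {n} Y"
      using above_mono[OF "1.prems"] .
    from "1.IH" \<open>n \<in> Y\<close> have "(\<exists>C. limit_node (insert n u) (above {n} Y) C) \<or>
        (\<forall>Y''. Y'' \<subseteq> above {n} Y \<longrightarrow> dead_node (insert n u) Y'')"
      by blast
    then show "(\<exists>C. limit_node (insert n u) (above {n} Y') C) \<or> dead_node (insert n u) (above {n} Y')"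
      using limit_node_mono[OF _ sub] sub by blast
  qed
qed

lemma const_node_children:
  "const_node u Y p \<Longrightarrow> u \<notin> B \<Longrightarrow> n \<in> Y \<Longrightarrow> const_node (insert n u) (above {n} Y) p"
  by (auto elim: const_node.cases)

lemma dead_node_children:
  "dead_node u Y \<Longrightarrow> n \<in> Y \<Longrightarrow>
    (\<exists>C. limit_node (insert n u) (above {n} Y) C) \<or> dead_node (insert n u) (above {n} Y)"
  by (auto elim: dead_node.cases)

lemma dead_node_notin: "dead_node u Y \<Longrightarrow> u \<notin> B"
  by (auto elim: dead_node.cases)

lemma const_node_value_in: "const_node u Y p \<Longrightarrow> infinite Y \<Longrightarrow> p \<in> P"
proof (induction rule: const_node.induct)
  case (node u Y p)
  then show ?case
    using infinite_above[OF node.prems] infinite_imp_nonempty by (metis finite.emptyI finite_insert ex_in_conv)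
qed (use f_into in blast)

lemma const_node_unique: "const_node u Y p \<Longrightarrow> const_node u Y p' \<Longrightarrow> infinite Y \<Longrightarrow> p = p'"
proof (induction arbitrary: p' rule: const_node.induct)
  case (leaf u Y)
  then show ?case by (auto elim: const_node.cases)
next
  case (node u Y p)
  obtain n where "n \<in> Y"
    using node.prems(2) infinite_imp_nonempty by blast
  then show ?case
    using node const_node_children infinite_above[OF node.prems(2)] by (meson finite.emptyI finite_insert)
qed

lemma not_const_and_limit_node:
  assumes const: "const_node u Y p" and limit: "limit_node u Y C" and Y: "infinite Y"
  shows False
proof -
  obtain q where u: "u \<notin> B" and C: "C \<in> S_omega P"
    and q: "\<forall>n\<in>Y. const_node (insert n u) (above {n} Y) (q n)"
    and q_limit: "\<forall>Y'\<subseteq>Y. infinite Y' \<longrightarrow> downset P (q ` Y') = downset P C"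
    using limit unfolding limit_node_def by blast
  have "q n = p" if "n \<in> Y" for n
    using const_node_unique q const_node_children[OF const u] that infinite_above[OF Y]
    by (meson finite.emptyI finite_insert)
  then have "q ` Y = {p}"
    using Y infinite_imp_nonempty by auto
  then show False
    using q_limit Y downset_S_omega_not_principal[OF C const_node_value_in[OF const Y]] by force
qed

lemma not_const_and_dead_node:
  "const_node u Y p \<Longrightarrow> dead_node u Y \<Longrightarrow> infinite Y \<Longrightarrow> False"
proof (induction rule: const_node.induct)
  case (leaf u Y)
  then show ?case using dead_node_notin by blast
next
  case (node u Y p)
  obtain n where n: "n \<in> Y"
    using node.prems(2) infinite_imp_nonempty by blast
  have "infinite (above {n} Y)"
    using infinite_above[OF node.prems(2)] by simp
  then show ?case
    using node n dead_node_children not_const_and_limit_node by blast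
qed

lemma not_limit_and_dead_node:
  assumes limit: "limit_node u Y C" and dead: "dead_node u Y" and Y: "infinite Y"
  shows False
proof -
  obtain q where q: "\<forall>n\<in>Y. const_node (insert n u) (above {n} Y) (q n)"
    using limit unfolding limit_node_def by blast
  obtain n where n: "n \<in> Y"
    using Y infinite_imp_nonempty by blast
  have "infinite (above {n} Y)"
    using infinite_above[OF Y] by simp
  then show False
    using q n dead_node_children[OF dead n] not_const_and_limit_node not_const_and_dead_node by blast
qed

definition classified :: "nat set \<Rightarrow> nat set \<Rightarrow> bool" where
  "classified u Y \<longleftrightarrow> (\<exists>p. const_node u Y p) \<or> (\<exists>C. limit_node u Y C) \<or> dead_node u Y"

lemma classified_mono: "classified u Y \<Longrightarrow> Y' \<subseteq> Y \<Longrightarrow> classified u Y'"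
  unfolding classified_def using const_node_mono limit_node_mono dead_node_mono by metis

text \<open>The wqo makes the constant values of the children eventually constant or convergent to a
  chain.\<close>
lemma const_children_classified:
  assumes u: "u \<notin> B" and Z: "infinite Z"
    and q: "\<And>n. n \<in> Z \<Longrightarrow> const_node (insert n u) (above {n} Z) (q n)"
  shows "\<exists>Z'\<subseteq>Z. infinite Z' \<and> classified u Z'"
proof -
  have "q ` Z \<subseteq> P"
    using q const_node_value_in infinite_above[OF Z] by (metis finite.emptyI finite_insert image_subset_iff)
  then obtain Z' where Z': "Z' \<subseteq> Z" "infinite Z'" and limit: "(\<exists>p. \<forall>n\<in>Z'. q n = p) \<or>
      (\<exists>C\<in>S_omega P. \<forall>Y\<subseteq>Z'. infinite Y \<longrightarrow> downset P (q ` Y) = downset P C)"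
    using wqo_on_limit[where q=q, OF wqo Z] by blast
  have q': "\<forall>n\<in>Z'. const_node (insert n u) (above {n} Z') (q n)"
  proof
    fix n assume "n \<in> Z'"
    then show "const_node (insert n u) (above {n} Z') (q n)"
      using const_node_mono[OF q above_mono[OF Z'(1)]] Z'(1) by blast
  qed
  have "classified u Z'"
    using limit
  proof
    assume "\<exists>p. \<forall>n\<in>Z'. q n = p"
    then show ?thesis
      using q' u unfolding classified_def by (metis const_node.node)
  next
    assume "\<exists>C\<in>S_omega P. \<forall>Y\<subseteq>Z'. infinite Y \<longrightarrow> downset P (q ` Y) = downset P C"
    then show ?thesis
      using q' u unfolding classified_def limit_node_def by blast
  qed
  then show ?thesis
    using Z' by blast
qed

lemma classified_node:
  assumes u: "u \<notin> B" and Z: "infinite Z" and children: "\<forall>n\<in>Z. classified (insert n u) (above {n} Z)"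
  shows "\<exists>Z'\<subseteq>Z. infinite Z' \<and> classified u Z'"
proof -
  define Z1 where "Z1 = {n\<in>Z. \<exists>p. const_node (insert n u) (above {n} Z) p}"
  have "Z = Z1 \<union> (Z - Z1)"
    unfolding Z1_def by blast
  then consider "infinite Z1" | "infinite (Z - Z1)"
    using Z by (metis infinite_Un)
  then show ?thesis
  proof cases
    case 1
    define q where "q n = (SOME p. const_node (insert n u) (above {n} Z) p)" for n
    have q: "const_node (insert n u) (above {n} Z1) (q n)" if "n \<in> Z1" for n
    proof -
      have "const_node (insert n u) (above {n} Z) (q n)"
        using that unfolding Z1_def q_def by (blast intro: someI_ex)
      then show ?thesis
        using const_node_mono above_mono[of Z1 Z] unfolding Z1_def by blast
    qed
    moreover have "Z1 \<subseteq> Z"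
      unfolding Z1_def by blast
    ultimately show ?thesis
      using const_children_classified[OF u 1 q] by blast
  next
    case 2
    have "dead_node u (Z - Z1)"
    proof (rule dead_node.intros[OF u], intro ballI)
      fix n assume n: "n \<in> Z - Z1"
      have sub: "above {n} (Z - Z1) \<subseteq> above {n} Z"
        by (rule above_mono) blast
      have "(\<exists>C. limit_node (insert n u) (above {n} Z) C) \<or> dead_node (insert n u) (above {n} Z)"
        using children n unfolding Z1_def classified_def by blast
      then show "(\<exists>C. limit_node (insert n u) (above {n} (Z - Z1)) C) \<or>
          dead_node (insert n u) (above {n} (Z - Z1))"
        using limit_node_mono[OF _ sub] dead_node_mono[OF _ sub] by blast
    qed
    then show ?thesis
      using 2 unfolding classified_def by blast
  qed
qed

lemma classified_root: "\<exists>X\<subseteq>\<Union>B. infinite X \<and> classified {} X"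
proof (rule front_tree_fusion[OF front_B])
  show "classified u Y'" if "classified u Y" "Y' \<subseteq> Y" for u Y Y'
    using classified_mono that .
  show "classified u Y" if "u \<in> B" for u Y
    using const_node.leaf[OF that] unfolding classified_def by blast
  show "\<exists>Z'\<subseteq>Z. infinite Z' \<and> classified u Z'"
    if "u \<notin> B" "infinite Z" "\<forall>n\<in>Z. classified (insert n u) (above {n} Z)" for u Z
    using classified_node[OF that] .
qed (use front_empty_prefix[OF front_B] front_infinite[OF front_B] in auto)

text \<open>The minimal limit nodes within X; they form a front when the root is dead.\<close>
definition limit_front :: "nat set \<Rightarrow> nat set set" where
  "limit_front X = {u. u \<subseteq> X \<and> u \<in> prefixes B \<and> (\<exists>C. limit_node u (above u X) C) \<and>
     (\<forall>w. init_seg w u \<and> w \<noteq> u \<longrightarrow> dead_node w (above w X))}"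

lemma empty_notin_limit_front:
  "dead_node {} X \<Longrightarrow> infinite X \<Longrightarrow> {} \<notin> limit_front X"
  unfolding limit_front_def using not_limit_and_dead_node by auto

text \<open>Below an initial segment s in B of Z, the shortest prefix of s that is not dead is a child of
  a dead node and hence a limit node.\<close>
lemma limit_front_init_seg:
  assumes dead: "dead_node {} X" and XB: "X \<subseteq> \<Union>B" and Z: "Z \<subseteq> X" "infinite Z"
  shows "\<exists>u\<in>limit_front X. init_seg u Z"
proof -
  obtain s where s: "s \<in> B" "init_seg s Z"
    using front_init_seg[OF front_B] XB Z by blast
  have "init_seg s s \<and> \<not> dead_node s (above s X)"
    using dead_node_notin[of s] s(1) by auto
  then obtain w where w: "init_seg w s" "\<not> dead_node w (above w X)"
    and w_least: "\<And>w'. init_seg w' s \<Longrightarrow> \<not> dead_node w' (above w' X) \<Longrightarrow> card w \<le> card w'"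
    using ex_has_least_nat[of "\<lambda>w. init_seg w s \<and> \<not> dead_node w (above w X)" s card] by blast
  have fw: "finite w"
    using w(1) front_finite[OF front_B s(1)] init_seg_subset finite_subset by blast
  have prefix_dead: "dead_node v (above v X)" if v: "init_seg v w" "v \<noteq> w" for v
  proof (rule ccontr)
    assume "\<not> dead_node v (above v X)"
    then have "card w \<le> card v"
      using w_least init_seg_trans[OF v(1) w(1)] by blast
    moreover have "card v < card w"
      using psubset_card_mono[OF fw] v init_seg_subset by blast
    ultimately show False by simp
  qed
  have "w \<noteq> {}"
    using w dead by auto
  then have m: "Max w \<in> w" "\<forall>x\<in>w - {Max w}. x < Max w"
    using fw Max_in Max_ge by fastforce+
  have wX: "w \<subseteq> X"
    using w(1) s(2) Z(1) init_seg_subset by blast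
  have "dead_node (w - {Max w}) (above (w - {Max w}) X)"
    using prefix_dead init_seg_Diff_Max[OF fw] m(1) by blast
  moreover have "Max w \<in> above (w - {Max w}) X"
    using m wX unfolding above_def by blast
  moreover have "insert (Max w) (w - {Max w}) = w"
    using m(1) by blast
  ultimately have "\<exists>C. limit_node w (above w X) C"
    using dead_node_children w(2) above_above[OF m(2)] by metis
  moreover have "w \<in> prefixes B"
    using w(1) s(1) unfolding prefixes_def by blast
  ultimately have "w \<in> limit_front X"
    unfolding limit_front_def using wX prefix_dead by blast
  then show ?thesis
    using w(1) s(2) init_seg_trans by blast
qed

lemma front_limit_front:
  assumes dead: "dead_node {} X" and XB: "X \<subseteq> \<Union>B" and X: "infinite X"
  shows "front (limit_front X) X"
proof -
  have "\<forall>s\<in>limit_front X. finite s \<and> s \<subseteq> X"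
    using front_prefix_subset(2)[OF front_B] unfolding limit_front_def by blast
  moreover have "\<forall>s\<in>limit_front X. \<forall>t\<in>limit_front X. init_seg s t \<longrightarrow> s = t"
  proof (intro ballI impI)
    fix s t assume st: "s \<in> limit_front X" "t \<in> limit_front X" "init_seg s t"
    show "s = t"
    proof (rule ccontr)
      assume "s \<noteq> t"
      then have "dead_node s (above s X)"
        using st unfolding limit_front_def by blast
      moreover obtain C where "limit_node s (above s X) C"
        using st(1) unfolding limit_front_def by blast
      moreover have "infinite (above s X)"
        using infinite_above[OF X] front_prefix_subset(2)[OF front_B] st(1) unfolding limit_front_def by blast
      ultimately show False
        using not_limit_and_dead_node by blast
    qed
  qed
  moreover have "\<forall>Z. Z \<subseteq> X \<and> infinite Z \<longrightarrow> (\<exists>s\<in>limit_front X. init_seg s Z)"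
    using limit_front_init_seg[OF dead XB] by blast
  ultimately show ?thesis
    unfolding front_def using X by blast
qed

end

section \<open>Badness propagates to constant values\<close>

definition shift_via :: "nat set \<Rightarrow> nat set \<Rightarrow> nat set \<Rightarrow> bool" where
  "shift_via u v r \<longleftrightarrow> finite r \<and> init_seg u r \<and> u \<noteq> r \<and> v = r - {Min r}"

lemma shift_via_shift: "shift_via u v r \<Longrightarrow> shift u v"
  unfolding shift_via_def shift_def using init_seg_subset finite_subset by (metis Diff_subset)

lemma shift_via_insert:
  assumes "shift_via u v r" "\<forall>x\<in>r. x < m"
  shows "shift_via u (insert m v) (insert m r)"
proof -
  have r: "finite r" "init_seg u r" "u \<noteq> r" "v = r - {Min r}"
    using assms(1) unfolding shift_via_def by auto
  then have "r \<noteq> {}"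
    using init_seg_subset by blast
  then have "Min r < m"
    using Min_in[OF r(1)] assms(2) by blast
  then have "Min (insert m r) = Min r"
    using Min_insert[OF r(1) \<open>r \<noteq> {}\<close>, of m] by simp
  moreover have "m \<notin> r"
    using assms(2) by blast
  ultimately have "insert m r - {Min (insert m r)} = insert m v"
    using \<open>Min r < m\<close> r(4) by auto
  moreover have "u \<noteq> insert m r"
    using init_seg_subset[OF r(2)] \<open>m \<notin> r\<close> by blast
  ultimately show ?thesis
    unfolding shift_via_def using r(1) init_seg_insert_greater[OF r(2) assms(2)] by simp
qed

lemma shift_via_insert_Min:
  assumes "shift_via u v r" "\<forall>x\<in>r. x < m"
  shows "shift_via (insert (Min (r - u)) u) (insert m v) (insert m r)"
proof -
  have r: "finite r" "init_seg u r" "u \<noteq> r"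
    using assms(1) unfolding shift_via_def by auto
  note seg = init_seg_next[OF r(2,3,1)]
  have "m \<notin> insert (Min (r - u)) u"
    using assms(2) seg(1) init_seg_subset[OF r(2)] by auto
  then have "insert (Min (r - u)) u \<noteq> insert m r"
    by auto
  then show ?thesis
    using shift_via_insert[OF assms] init_seg_insert_greater[OF seg(4) assms(2)]
    unfolding shift_via_def by simp
qed

locale bad_barrier_map = barrier_map +
  assumes bad: "\<And>s t. s \<in> B \<Longrightarrow> t \<in> B \<Longrightarrow> shift s t \<Longrightarrow> \<not> f s \<le> f t"
begin

text \<open>Follow r downwards from u to a member s of B; then s still shifts to v and f s = p.\<close>
lemma const_node_bad_leaf:
  assumes XB: "X \<subseteq> \<Union>B" and v: "v \<in> B" and rX: "r \<subseteq> X"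
  shows "u \<in> prefixes B \<Longrightarrow> const_node u (above u X) p \<Longrightarrow> shift_via u v r \<Longrightarrow> \<not> p \<le> f v"
  using wf_prefix_ext[OF front_B]
proof (induction u rule: wf_induct_rule)
  case (less u)
  show ?case
  proof (cases "u \<in> B")
    case True
    then show ?thesis
      using less.prems(2) bad[OF True v shift_via_shift[OF less.prems(3)]]
      by (auto elim: const_node.cases)
  next
    case False
    have r: "finite r" "init_seg u r" "u \<noteq> r" "v = r - {Min r}"
      using less.prems(3) unfolding shift_via_def by auto
    define n where "n = Min (r - u)"
    note seg = init_seg_next[OF r(2,3,1), folded n_def]
    have n: "n \<in> above u X" "n \<in> \<Union>B"
      using seg(1,3) rX XB unfolding above_def by auto
    note child = prefix_child_B[OF less.prems(1) False n(2) seg(3)]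
    have "const_node (insert n u) (above (insert n u) X) p"
      using const_node_children[OF less.prems(2) False n(1)] above_above[OF seg(3)] by simp
    moreover have "insert n u \<noteq> r"
    proof
      assume eq: "insert n u = r"
      obtain t where t: "t \<in> B" "init_seg r t"
        using child(1) eq unfolding prefixes_def by blast
      have "Min r \<in> r"
        using seg(1) r(1) Min_in by blast
      then have "v \<subset> t"
        using init_seg_subset[OF t(2)] r(4) by blast
      then show False
        using thin_B[OF v t(1)] by blast
    qed
    then have "shift_via (insert n u) v r"
      using seg(4) r unfolding shift_via_def by blast
    ultimately show ?thesis
      using less.IH[OF child(2,1)] by blast
  qed
qed

text \<open>Extend v by elements beyond r until it reaches B, keeping u shifted to it.\<close>
lemma const_nodes_bad:
  assumes XB: "X \<subseteq> \<Union>B" and X: "infinite X"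
    and u: "u \<in> prefixes B" "const_node u (above u X) p"
  shows "v \<in> prefixes B \<Longrightarrow> const_node v (above v X) q \<Longrightarrow> shift_via u v r \<Longrightarrow> r \<subseteq> X \<Longrightarrow> \<not> p \<le> q"
  using wf_prefix_ext[OF front_B]
proof (induction v arbitrary: r rule: wf_induct_rule)
  case (less v)
  show ?case
  proof (cases "v \<in> B")
    case True
    then show ?thesis
      using less.prems const_node_bad_leaf[OF XB True less.prems(4) u] by (auto elim: const_node.cases)
  next
    case False
    have r: "finite r" "v = r - {Min r}"
      using less.prems(3) unfolding shift_via_def by auto
    obtain m where "m \<in> above r X"
      using infinite_above[OF X r(1)] infinite_imp_nonempty by blast
    then have m: "m \<in> X" "\<forall>x\<in>r. x < m"
      unfolding above_def by auto
    then have mv: "\<forall>x\<in>v. x < m" "m \<in> above v X"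
      using r(2) unfolding above_def by auto
    note child = prefix_child_B[OF less.prems(1) False _ mv(1)]
    have "const_node (insert m v) (above (insert m v) X) q"
      using const_node_children[OF less.prems(2) False mv(2)] above_above[OF mv(1)] by simp
    moreover have "shift_via u (insert m v) (insert m r)" "insert m r \<subseteq> X"
      using shift_via_insert[OF less.prems(3) m(2)] less.prems(4) m(1) by auto
    ultimately show ?thesis
      using less.IH child m(1) XB by blast
  qed
qed

lemma singleton_const_nodes_bad:
  assumes XB: "X \<subseteq> \<Union>B" and X: "infinite X" and ab: "a \<in> X" "b \<in> X" "a < b"
    and p: "const_node {a} (above {a} X) p" and q: "const_node {b} (above {b} X) q"
  shows "\<not> p \<le> q"
proof -
  have "shift_via {a} {b} {a, b}"
    unfolding shift_via_def init_seg_def using ab(3) by auto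
  moreover have "a \<in> \<Union>B" "b \<in> \<Union>B"
    using ab XB by blast+
  then have "{a} \<in> prefixes B" "{b} \<in> prefixes B"
    using prefix_child_B(1)[OF front_empty_prefix[OF front_B] empty_notin_B] by simp_all
  ultimately show ?thesis
    using const_nodes_bad[OF XB X _ p _ q] ab by blast
qed

lemma root_not_const_node:
  assumes XB: "X \<subseteq> \<Union>B" and X: "infinite X"
  shows "\<not> const_node {} X p"
proof
  assume const: "const_node {} X p"
  obtain a where "a \<in> X"
    using X infinite_imp_nonempty by blast
  moreover obtain b where "b \<in> above {a} X"
    using infinite_above[OF X, of "{a}"] infinite_imp_nonempty by blast
  ultimately have ab: "a \<in> X" "b \<in> X" "a < b"
    unfolding above_def by auto
  then show False
    using singleton_const_nodes_bad[OF XB X ab] const_node_children[OF const empty_notin_B] by auto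
qed

lemma root_not_limit_node:
  assumes XB: "X \<subseteq> \<Union>B" and X: "infinite X"
  shows "\<not> limit_node {} X C"
proof
  assume "limit_node {} X C"
  then obtain q where q: "\<forall>n\<in>X. const_node {n} (above {n} X) (q n)"
    unfolding limit_node_def by auto
  then have "q ` X \<subseteq> P"
    using const_node_value_in infinite_above[OF X] by (metis finite.emptyI finite_insert image_subset_iff)
  then obtain a b where "a \<in> X" "b \<in> X" "a < b" "q a \<le> q b"
    using wqo_on_good_pair[OF wqo X] by blast
  then show False
    using singleton_const_nodes_bad[OF XB X] q by blast
qed

text \<open>If C is dominated by D, the constant q n below the child of u along the shift lies below the
  constant q' m below some child of v beyond it, and these two children still shift.\<close>
lemma limit_nodes_bad:
  assumes XB: "X \<subseteq> \<Union>B" and X: "infinite X"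
    and u: "u \<in> prefixes B" "u \<subseteq> X" "u \<noteq> {}" "limit_node u (above u X) C"
    and v: "v \<in> prefixes B" "v \<subseteq> X" "limit_node v (above v X) D"
    and shift: "shift u v"
  shows "\<not> dom_le C D"
proof
  assume dom: "dom_le C D"
  obtain r where sv: "shift_via u v r"
    using shift unfolding shift_def shift_via_def by blast
  then have r: "finite r" "init_seg u r" "u \<noteq> r" "v = r - {Min r}"
    unfolding shift_via_def by auto
  have rX: "r \<subseteq> X"
    using Min_in_init_seg[OF r(2) u(3) r(1)] u(2) v(2) r(4) by blast
  define n where "n = Min (r - u)"
  note seg = init_seg_next[OF r(2,3,1), folded n_def]
  have n: "n \<in> above u X" "n \<in> \<Union>B"
    using seg(1,3) rX XB unfolding above_def by auto
  obtain q where uB: "u \<notin> B"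
    and q: "\<forall>k\<in>above u X. const_node (insert k u) (above {k} (above u X)) (q k)"
    and q_limit: "\<forall>Y\<subseteq>above u X. infinite Y \<longrightarrow> downset P (q ` Y) = downset P C"
    using u(4) unfolding limit_node_def by blast
  obtain q' where vB: "v \<notin> B"
    and q': "\<forall>k\<in>above v X. const_node (insert k v) (above {k} (above v X)) (q' k)"
    and q'_limit: "\<forall>Y\<subseteq>above v X. infinite Y \<longrightarrow> downset P (q' ` Y) = downset P D"
    using v(3) unfolding limit_node_def by blast
  have fin_u: "finite u"
    using front_prefix_subset(2)[OF front_B u(1)] .
  have qn: "const_node (insert n u) (above (insert n u) X) (q n)"
    using q[rule_format, OF n(1)] by (simp only: above_above[OF seg(3)])
  then have "q n \<in> P"
    using const_node_value_in infinite_above[OF X] fin_u by simp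
  then have "q n \<in> downset P (q ` above u X)"
    using n(1) unfolding downset_def by blast
  also have "\<dots> = downset P C"
    using q_limit infinite_above[OF X fin_u] by blast
  also have "\<dots> \<subseteq> downset P D"
    using dom_le_downset[OF dom] .
  also have "\<dots> = downset P (q' ` above r X)"
    using q'_limit above_antimono[of v r X] r(4) infinite_above[OF X r(1)] by auto
  finally obtain m where m: "m \<in> above r X" "q n \<le> q' m"
    unfolding downset_def by blast
  then have m_r: "\<forall>x\<in>r. x < m" "m \<in> \<Union>B" "m \<in> above v X" "\<forall>x\<in>v. x < m"
    using XB r(4) unfolding above_def by auto
  have qm: "const_node (insert m v) (above (insert m v) X) (q' m)"
    using q'[rule_format, OF m_r(3)] by (simp only: above_above[OF m_r(4)])
  have "shift_via (insert n u) (insert m v) (insert m r)"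
    using shift_via_insert_Min[OF sv m_r(1)] unfolding n_def .
  moreover have "insert m r \<subseteq> X"
    using rX m(1) above_subset by blast
  ultimately have "\<not> q n \<le> q' m"
    using const_nodes_bad[OF XB X prefix_child_B(1)[OF u(1) uB n(2) seg(3)] qn
        prefix_child_B(1)[OF v(1) vB m_r(2,4)] qm] by blast
  then show False
    using m(2) by blast
qed

lemma S_omega_not_bqo: "\<not> bqo_on (S_omega P) dom_le"
proof
  assume bqo: "bqo_on (S_omega P) dom_le"
  obtain X where XB: "X \<subseteq> \<Union>B" and X: "infinite X" and root: "classified {} X"
    using classified_root by blast
  then have dead: "dead_node {} X"
    using root_not_const_node[OF XB X] root_not_limit_node[OF XB X] unfolding classified_def by blast
  note empty = empty_notin_limit_front[OF dead X]
  obtain Y where B': "barrier {u\<in>limit_front X. u \<subseteq> Y}"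
    using front_barrier_subset[OF front_limit_front[OF dead XB X] empty] by blast
  define g where "g u = (SOME C. limit_node u (above u X) C)" for u
  have g: "limit_node u (above u X) (g u)" if "u \<in> limit_front X" for u
    using that unfolding limit_front_def g_def by (blast intro: someI_ex)
  then have gS: "g ` {u\<in>limit_front X. u \<subseteq> Y} \<subseteq> S_omega P"
    unfolding limit_node_def by blast
  obtain s t where st: "s \<in> limit_front X" "t \<in> limit_front X" "shift s t" "dom_le (g s) (g t)"
    using bqo_on_good[OF bqo B' gS] unfolding good_def by blast
  have "s \<in> prefixes B" "s \<subseteq> X" "t \<in> prefixes B" "t \<subseteq> X"
    using st(1,2) unfolding limit_front_def by blast+
  moreover have "s \<noteq> {}"
    using st(1) empty by blast
  ultimately show False
    using limit_nodes_bad[OF XB X _ _ _ g[OF st(1)] _ _ g[OF st(2)] st(3)] st(4) by blast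
qed

end

theorem theorem1p1:
  fixes P :: "'a::order set"
  assumes "wqo_on P (\<le>)"
    and "bqo_on (S_omega P) dom_le"
  shows "bqo_on P (\<le>)"
proof (rule bqo_onI, rule ccontr)
  fix B and f :: "nat set \<Rightarrow> 'a"
  assume "barrier B" "f ` B \<subseteq> P" "\<not> good (\<le>) B f"
  then interpret bad_barrier_map P B f
    using assms(1) unfolding good_def by unfold_locales blast+
  show False
    using S_omega_not_bqo assms(2) by blast
qed

end
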